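(* Let $\mathscr{H}$ be a real Hilbert space and let $\mathcal{V}=\{v_n\}_{n=0}^\infty\subset\mathscr{H}$ be a sequence without positive relations such that $\mathcal{C}[[\mathcal{V}]]$ is closed. For $S\subset\mathbb{N}$ let \[ \mathscr{H}(\mathcal{V},S)=\Big\{w\in\mathscr{H} : P_{\mathcal{C}[[\mathcal{V}]]}(w)=\sum_{n\in S}a_nv_n\ \text{with } a_n>0\text{ for all }n\in S\Big\}. \] Then $\mathscr{H}=\bigsqcup_{S\subset\mathbb{N}}\mathscr{H}(\mathcal{V},S)$ (a disjoint union). Moreover, for every $S\subset\mathbb{N}$, the set $\{0\}\cup\mathscr{H}(\mathcal{V},S)$ is a convex cone, and for all $\lambda_1,\lambda_2>0$ and all $w_1,w_2\in\mathscr{H}(\mathcal{V},S)$, \[ P_{\mathcal{C}[[\mathcal{V}]]}(\lambda_1w_1+\lambda_2w_2)=\lambda_1P_{\mathcal{C}[[\mathcal{V}]]}(w_1)+\lambda_2P_{\mathcal{C}[[\mathcal{V}]]}(w_2). \]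
   Context: $\mathbb{N}=\{0,1,2,\dots\}$. $\mathcal{C}[[\mathcal{V}]]=\{\sum_{n=0}^\infty a_n v_n : a_n\ge 0,\ \text{the series converges in }\mathscr{H}\}$ (convergence of partial sums). For $S\subset\mathbb{N}$, $\sum_{n\in S}a_nv_n$ means $\lim_{N\to\infty}\sum_{n\in S,\,n\le N}a_nv_n$, and the empty sum is $0$. A sequence has no positive relations if $\sum a_nv_n=\sum b_nv_n$ for convergent series with $a_n,b_n\ge0$ implies $a_n=b_n$ for all $n$. $P_K$ denotes the metric projection onto a closed convex set $K$ (the unique nearest point). *)

theory Defs
  imports "HOL-Analysis.Analysis"
begin

definition series_cone :: "(nat \<Rightarrow> 'a::real_normed_vector) \<Rightarrow> 'a set" where
  "series_cone V = {w. \<exists>a. (\<forall>n. a n \<ge> 0) \<and> (\<lambda>n. a n *\<^sub>R V n) sums w}"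

definition no_positive_relations :: "(nat \<Rightarrow> 'a::real_normed_vector) \<Rightarrow> bool" where
  "no_positive_relations V \<longleftrightarrow>
     (\<forall>a b w. (\<forall>n. a n \<ge> 0) \<longrightarrow> (\<forall>n. b n \<ge> 0) \<longrightarrow>
        (\<lambda>n. a n *\<^sub>R V n) sums w \<longrightarrow> (\<lambda>n. b n *\<^sub>R V n) sums w \<longrightarrow> (\<forall>n. a n = b n))"

definition metric_proj :: "'a::metric_space set \<Rightarrow> 'a \<Rightarrow> 'a" where
  "metric_proj K w = (THE p. p \<in> K \<and> (\<forall>q\<in>K. dist w p \<le> dist w q))"

definition face_region :: "(nat \<Rightarrow> 'a::real_normed_vector) \<Rightarrow> nat set \<Rightarrow> 'a set" where
  "face_region V S = {w. \<exists>a. (\<forall>n\<in>S. a n > 0) \<and>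
      (\<lambda>n. if n \<in> S then a n *\<^sub>R V n else 0) sums metric_proj (series_cone V) w}"

end

theory Submission
  imports Defs
begin

text \<open>
  In a Hilbert space the nearest point p = P w of a closed convex cone C exists (minimizing
  sequences are Cauchy by the parallelogram law) and is characterised by p \<in> C,
  \<open>\<langle>w - p, p\<rangle> = 0\<close> and \<open>\<langle>w - p, q\<rangle> \<le> 0\<close> for all q \<in> C. For C = C[[V]], the absence of positive
  relations makes the coefficients of P w unique, so their support is the unique S with
  w \<in> H(V,S). If the coefficient of v_n in P w is positive, it can be raised or lowered a
  little inside C, which forces w - P w \<bottom> v_n. Hence for w1, w2 \<in> H(V,S) the residual of
  each is orthogonal to the projection of the other, and then P w1 + P w2 satisfies the
  characterisation for w1 + w2. Together with the positive homogeneity of P this gives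
  additivity on H(V,S) and the cone property.
\<close>

lemma norm_diff_square:
  fixes x y :: "'a::real_inner"
  shows "norm (x - y)^2 = norm x^2 - 2 * inner x y + norm y^2"
  by (simp add: power2_norm_eq_inner inner_diff_left inner_diff_right inner_commute)

lemma norm_diff_midpoint_square:
  fixes w p q :: "'a::real_inner"
  shows "4 * norm (w - midpoint p q)^2 + norm (p - q)^2 = 2 * norm (w - p)^2 + 2 * norm (w - q)^2"
proof -
  have "4 * norm (w - midpoint p q)^2 = norm ((w - p) + (w - q))^2"
    by (simp add: midpoint_def algebra_simps power2_norm_eq_inner inner_commute)
  moreover have "p - q = (w - q) - (w - p)" by simp
  ultimately show ?thesis
    by (simp only:) (simp add: power2_norm_eq_inner inner_add_left inner_add_right
        inner_diff_left inner_diff_right inner_commute)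
qed

lemma midpoint_in_convex:
  "convex K \<Longrightarrow> p \<in> K \<Longrightarrow> q \<in> K \<Longrightarrow> midpoint p q \<in> K"
  unfolding midpoint_def scaleR_add_right by (rule convexD) auto

lemma nearest_point_unique:
  fixes K :: "'a::real_inner set"
  assumes "convex K" "p \<in> K" "p' \<in> K"
    and "\<forall>q\<in>K. dist w p \<le> dist w q" "\<forall>q\<in>K. dist w p' \<le> dist w q"
  shows "p = p'"
proof -
  have same: "norm (w - p') = norm (w - p)"
    using assms by (auto simp: dist_norm intro: order_antisym)
  have "norm (w - p) \<le> norm (w - midpoint p p')"
    using assms midpoint_in_convex[OF assms(1-3)] by (simp add: dist_norm)
  then have "norm (w - p)^2 \<le> norm (w - midpoint p p')^2"
    by (simp add: power_mono)
  with norm_diff_midpoint_square[of w p p', unfolded same]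
  have "norm (p - p')^2 \<le> 0" by linarith
  then show "p = p'" by simp
qed

lemma minimizing_sequence_Cauchy:
  fixes q :: "nat \<Rightarrow> 'a::real_inner"
  assumes "convex K" "\<And>n. q n \<in> K" "(\<lambda>n. dist w (q n)) \<longlonglongrightarrow> infdist w K"
  shows "Cauchy q"
proof (rule metric_CauchyI)
  fix e :: real assume "e > 0"
  let ?d = "infdist w K"
  have "(\<lambda>n. dist w (q n)^2) \<longlonglongrightarrow> ?d^2"
    using assms(3) by (intro tendsto_intros)
  moreover have "?d^2 < ?d^2 + e^2/4" using \<open>e > 0\<close> by simp
  ultimately obtain M where M: "\<And>n. n \<ge> M \<Longrightarrow> dist w (q n)^2 < ?d^2 + e^2/4"
    by (metis (no_types, lifting) eventually_sequentially order_tendstoD(2))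
  have "dist (q m) (q n) < e" if "m \<ge> M" "n \<ge> M" for m n
  proof -
    have "?d \<le> norm (w - midpoint (q m) (q n))"
      using infdist_le[OF midpoint_in_convex[OF assms(1,2,2)]] by (simp add: dist_norm)
    then have "?d^2 \<le> norm (w - midpoint (q m) (q n))^2"
      by (simp add: infdist_nonneg power_mono)
    with norm_diff_midpoint_square[of w "q m" "q n"] M[OF \<open>m \<ge> M\<close>] M[OF \<open>n \<ge> M\<close>]
    have "norm (q m - q n)^2 < e^2" by (simp add: dist_norm)
    then show ?thesis
      using \<open>e > 0\<close> by (simp add: dist_norm power_less_imp_less_base)
  qed
  then show "\<exists>M. \<forall>m\<ge>M. \<forall>n\<ge>M. dist (q m) (q n) < e" by blast
qed

lemma nearest_point_exists:
  fixes K :: "'a::{real_inner,complete_space} set"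
  assumes "closed K" "convex K" "K \<noteq> {}"
  obtains p where "p \<in> K" "\<forall>q\<in>K. dist w p \<le> dist w q"
proof -
  have "infdist w K \<in> closure (dist w ` K)"
    using assms(3) unfolding infdist_notempty[OF assms(3)]
    by (intro closure_contains_Inf) (auto intro: bdd_belowI[where m=0])
  then obtain d where d: "\<forall>n. \<exists>x. x \<in> K \<and> d n = dist w x" "d \<longlonglongrightarrow> infdist w K"
    unfolding closure_sequential by blast
  then obtain q where "\<And>n. q n \<in> K" "d = (\<lambda>n. dist w (q n))"
    using choice[OF d(1)] by (auto simp: fun_eq_iff)
  with d(2) have q: "\<And>n. q n \<in> K" "(\<lambda>n. dist w (q n)) \<longlonglongrightarrow> infdist w K"
    by simp_all
  obtain p where p: "q \<longlonglongrightarrow> p"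
    using Cauchy_convergent[OF minimizing_sequence_Cauchy[OF assms(2) q]] convergent_def by blast
  have "p \<in> K"
    using closed_sequentially[OF assms(1)] q(1) p by blast
  moreover have "dist w p = infdist w K"
    using tendsto_dist[OF tendsto_const p] q(2) by (rule LIMSEQ_unique)
  ultimately show thesis
    using that infdist_le by metis
qed

lemma nonpos_if_le_scaled_near_0:
  fixes c b :: real
  assumes "\<And>t. 0 < t \<Longrightarrow> t < 1 \<Longrightarrow> c \<le> t * b"
  shows "c \<le> 0"
proof -
  have "((\<lambda>t. t * b) \<longlongrightarrow> 0 * b) (at_right 0)"
    by (intro tendsto_intros)
  moreover have "\<forall>\<^sub>F t in at_right 0. c \<le> t * b"
    using eventually_at_right_real[of 0 1] by (rule eventually_mono) (auto intro: assms)
  ultimately show ?thesis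
    using tendsto_le[OF trivial_limit_at_right_real] tendsto_const by fastforce
qed

lemma nearest_point_iff_obtuse:
  fixes K :: "'a::real_inner set"
  assumes "convex K" "p \<in> K"
  shows "(\<forall>q\<in>K. dist w p \<le> dist w q) \<longleftrightarrow> (\<forall>q\<in>K. inner (w - p) (q - p) \<le> 0)"
proof (intro iffI ballI)
  fix q assume nearest: "\<forall>q\<in>K. dist w p \<le> dist w q" and "q \<in> K"
  have "2 * inner (w - p) (q - p) \<le> t * norm (q - p)^2" if "0 < t" "t < 1" for t
  proof -
    have "p + t *\<^sub>R (q - p) \<in> K"
      using convexD[OF assms \<open>q \<in> K\<close>, of "1 - t" t] that by (simp add: algebra_simps)
    then have "norm (w - p) \<le> norm ((w - p) - t *\<^sub>R (q - p))"
      using nearest by (force simp: dist_norm algebra_simps)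
    then have "norm (w - p)^2 \<le> norm ((w - p) - t *\<^sub>R (q - p))^2"
      by (simp add: power_mono)
    also have "\<dots> = norm (w - p)^2 - 2 * inner (w - p) (t *\<^sub>R (q - p)) + norm (t *\<^sub>R (q - p))^2"
      by (rule norm_diff_square)
    also have "\<dots> = norm (w - p)^2 - t * (2 * inner (w - p) (q - p)) + t * (t * norm (q - p)^2)"
      by (simp add: power_mult_distrib power2_eq_square)
    finally have "t * (2 * inner (w - p) (q - p)) \<le> t * (t * norm (q - p)^2)"
      by simp
    then show ?thesis using \<open>t > 0\<close> by simp
  qed
  then have "2 * inner (w - p) (q - p) \<le> 0"
    by (rule nonpos_if_le_scaled_near_0)
  then show "inner (w - p) (q - p) \<le> 0"
    by simp
next
  fix q assume obtuse: "\<forall>q\<in>K. inner (w - p) (q - p) \<le> 0" and "q \<in> K"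
  have "norm (w - q)^2 = norm ((w - p) - (q - p))^2" by simp
  also have "\<dots> = norm (w - p)^2 - 2 * inner (w - p) (q - p) + norm (q - p)^2"
    by (rule norm_diff_square)
  finally have "norm (w - p)^2 \<le> norm (w - q)^2"
    using obtuse \<open>q \<in> K\<close> by (smt (verit) zero_le_power2)
  then show "dist w p \<le> dist w q"
    by (simp add: dist_norm power2_le_iff_abs_le)
qed

lemma metric_proj_eqI:
  fixes K :: "'a::real_inner set"
  assumes "convex K" "p \<in> K" "\<And>q. q \<in> K \<Longrightarrow> inner (w - p) (q - p) \<le> 0"
  shows "metric_proj K w = p"
  unfolding metric_proj_def
proof (rule the_equality)
  show "p \<in> K \<and> (\<forall>q\<in>K. dist w p \<le> dist w q)"
    using assms nearest_point_iff_obtuse by blast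
  show "p' = p" if "p' \<in> K \<and> (\<forall>q\<in>K. dist w p' \<le> dist w q)" for p'
    using nearest_point_unique[OF assms(1)] that \<open>p \<in> K \<and> _\<close> by blast
qed

lemma metric_proj:
  fixes K :: "'a::{real_inner,complete_space} set"
  assumes "closed K" "convex K" "K \<noteq> {}"
  shows metric_proj_in: "metric_proj K w \<in> K"
    and metric_proj_obtuse: "q \<in> K \<Longrightarrow> inner (w - metric_proj K w) (q - metric_proj K w) \<le> 0"
proof -
  obtain p where p: "p \<in> K" "\<forall>q\<in>K. dist w p \<le> dist w q"
    using nearest_point_exists[OF assms] .
  then have "metric_proj K w = p"
    using metric_proj_eqI[OF assms(2)] nearest_point_iff_obtuse[OF assms(2)] by blast
  with p nearest_point_iff_obtuse[OF assms(2)]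
  show "metric_proj K w \<in> K" "q \<in> K \<Longrightarrow> inner (w - metric_proj K w) (q - metric_proj K w) \<le> 0"
    by auto
qed

lemma metric_proj_convex_cone:
  fixes K :: "'a::{real_inner,complete_space} set"
  assumes "convex_cone K" "closed K"
  shows metric_proj_convex_cone_in: "metric_proj K w \<in> K"
    and metric_proj_convex_cone_orthogonal: "inner (w - metric_proj K w) (metric_proj K w) = 0"
    and metric_proj_convex_cone_polar: "q \<in> K \<Longrightarrow> inner (w - metric_proj K w) q \<le> 0"
proof -
  let ?p = "metric_proj K w"
  have K: "closed K" "convex K" "K \<noteq> {}"
    using assms by (auto simp: convex_cone_def)
  show p: "?p \<in> K"
    using metric_proj_in[OF K] .
  show polar: "inner (w - ?p) q \<le> 0" if "q \<in> K" for q
    using metric_proj_obtuse[OF K convex_cone_add[OF assms(1) p that], where w=w] by simp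
  have "inner (w - ?p) (0 - ?p) \<le> 0"
    using metric_proj_obtuse[OF K convex_cone_contains_0[OF assms(1)]] .
  with polar[OF p] show "inner (w - ?p) ?p = 0"
    by simp
qed

lemma metric_proj_convex_cone_eqI:
  fixes K :: "'a::real_inner set"
  assumes "convex_cone K" "p \<in> K"
    and "inner (w - p) p = 0" "\<And>q. q \<in> K \<Longrightarrow> inner (w - p) q \<le> 0"
  shows "metric_proj K w = p"
  using assms(1,2) by (intro metric_proj_eqI) (auto simp: convex_cone_def inner_diff_right assms(3,4))

lemma metric_proj_convex_cone_scaleR:
  fixes K :: "'a::{real_inner,complete_space} set"
  assumes "convex_cone K" "closed K" "l \<ge> 0"
  shows "metric_proj K (l *\<^sub>R w) = l *\<^sub>R metric_proj K w"
proof (rule metric_proj_convex_cone_eqI[OF assms(1)])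
  let ?p = "metric_proj K w"
  have eq: "l *\<^sub>R w - l *\<^sub>R ?p = l *\<^sub>R (w - ?p)"
    by (simp add: scaleR_diff_right)
  show "l *\<^sub>R ?p \<in> K"
    using convex_cone_scaleR[OF assms(1,3) metric_proj_convex_cone_in[OF assms(1,2)]] .
  show "inner (l *\<^sub>R w - l *\<^sub>R ?p) (l *\<^sub>R ?p) = 0"
    unfolding eq using metric_proj_convex_cone_orthogonal[OF assms(1,2)] by simp
  show "inner (l *\<^sub>R w - l *\<^sub>R ?p) q \<le> 0" if "q \<in> K" for q
    unfolding eq using metric_proj_convex_cone_polar[OF assms(1,2) that] assms(3)
    by (simp add: mult_nonneg_nonpos)
qed

lemma metric_proj_convex_cone_add:
  fixes K :: "'a::{real_inner,complete_space} set"
  assumes "convex_cone K" "closed K"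
    and "inner (w1 - metric_proj K w1) (metric_proj K w2) = 0"
    and "inner (w2 - metric_proj K w2) (metric_proj K w1) = 0"
  shows "metric_proj K (w1 + w2) = metric_proj K w1 + metric_proj K w2"
proof (rule metric_proj_convex_cone_eqI[OF assms(1)])
  let ?p1 = "metric_proj K w1" and ?p2 = "metric_proj K w2"
  have eq: "w1 + w2 - (?p1 + ?p2) = (w1 - ?p1) + (w2 - ?p2)"
    by simp
  show "?p1 + ?p2 \<in> K"
    using assms(1,2) by (intro convex_cone_add metric_proj_convex_cone_in)
  show "inner (w1 + w2 - (?p1 + ?p2)) (?p1 + ?p2) = 0"
    unfolding eq using assms(3,4) metric_proj_convex_cone_orthogonal[OF assms(1,2)]
    by (simp add: inner_add_left inner_add_right)
  show "inner (w1 + w2 - (?p1 + ?p2)) q \<le> 0" if "q \<in> K" for q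
    unfolding eq using metric_proj_convex_cone_polar[OF assms(1,2) that]
    by (simp add: inner_add_left add_nonpos_nonpos)
qed

lemma convex_cone_series_cone: "convex_cone (series_cone V)"
  unfolding convex_cone_iff series_cone_def
proof (intro conjI ballI allI impI; clarify?)
  show "\<exists>a. (\<forall>n. 0 \<le> a n) \<and> (\<lambda>n. a n *\<^sub>R V n) sums 0"
    by (intro exI[of _ "\<lambda>_. 0"]) simp
  fix a b x y
  assume "\<forall>n. 0 \<le> a n" "(\<lambda>n. a n *\<^sub>R V n) sums x" "\<forall>n. 0 \<le> b n" "(\<lambda>n. b n *\<^sub>R V n) sums y"
  then show "\<exists>c. (\<forall>n. 0 \<le> c n) \<and> (\<lambda>n. c n *\<^sub>R V n) sums (x + y)"
    by (intro exI[of _ "\<lambda>n. a n + b n"]) (auto simp: scaleR_add_left intro: sums_add)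
next
  fix a x and l :: real
  assume "\<forall>n. 0 \<le> a n" "(\<lambda>n. a n *\<^sub>R V n) sums x" "0 \<le> l"
  then show "\<exists>c. (\<forall>n. 0 \<le> c n) \<and> (\<lambda>n. c n *\<^sub>R V n) sums (l *\<^sub>R x)"
    by (intro exI[of _ "\<lambda>n. l * a n"]) (auto dest: sums_scaleR_right[of _ _ l])
qed

lemma series_cone_perturb:
  assumes "(\<lambda>k. a k *\<^sub>R V k) sums p" "\<forall>k. a k \<ge> 0" "a n + t \<ge> 0"
  shows "p + t *\<^sub>R V n \<in> series_cone V"
proof -
  let ?b = "\<lambda>k. a k + (if k = n then t else 0)"
  have "(\<lambda>k. ?b k *\<^sub>R V k) = (\<lambda>k. a k *\<^sub>R V k + (if k = n then t *\<^sub>R V k else 0))"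
    by (auto simp: fun_eq_iff scaleR_add_left)
  also have "\<dots> sums (p + t *\<^sub>R V n)"
    by (intro sums_add assms(1) sums_single)
  finally have "(\<lambda>k. ?b k *\<^sub>R V k) sums (p + t *\<^sub>R V n)" .
  then show ?thesis
    unfolding series_cone_def using assms(2,3) by (intro CollectI exI[of _ ?b]) auto
qed

lemma inner_sums_eq_0:
  fixes V :: "nat \<Rightarrow> 'a::real_inner"
  assumes "(\<lambda>k. b k *\<^sub>R V k) sums q" "\<And>k. b k \<noteq> 0 \<Longrightarrow> inner x (V k) = 0"
  shows "inner x q = 0"
proof -
  have "(\<lambda>k. inner x (b k *\<^sub>R V k)) sums inner x q"
    by (rule bounded_linear.sums[OF bounded_linear_inner_right assms(1)])
  moreover have "(\<lambda>k. inner x (b k *\<^sub>R V k)) = (\<lambda>k. 0)"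
    using assms(2) by (auto simp: fun_eq_iff)
  ultimately show ?thesis
    by (metis sums_zero sums_unique2)
qed

lemma metric_proj_series_cone_residual_orthogonal:
  fixes V :: "nat \<Rightarrow> 'a::{real_inner,complete_space}"
  assumes "closed (series_cone V)" "\<forall>k. a k \<ge> 0"
    and "(\<lambda>k. a k *\<^sub>R V k) sums metric_proj (series_cone V) w" "a n > 0"
  shows "inner (w - metric_proj (series_cone V) w) (V n) = 0"
proof -
  let ?K = "series_cone V"
  let ?p = "metric_proj ?K w"
  have K: "closed ?K" "convex ?K" "?K \<noteq> {}"
    using assms(1) convex_cone_series_cone by (auto simp: convex_cone_def)
  have "?p + 1 *\<^sub>R V n \<in> ?K" "?p + (- a n) *\<^sub>R V n \<in> ?K"
    using assms(2,4) by (intro series_cone_perturb[OF assms(3)]; simp)+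
  from this[THEN metric_proj_obtuse[OF K, where w=w]]
  have "inner (w - ?p) (V n) \<le> 0" "a n * inner (w - ?p) (V n) \<ge> 0"
    by simp_all
  with \<open>a n > 0\<close> show ?thesis
    by (simp add: zero_le_mult_iff)
qed

lemma face_region_iff:
  "w \<in> face_region V S \<longleftrightarrow>
    (\<exists>a. (\<forall>n. a n \<ge> 0) \<and> S = {n. a n > 0} \<and>
         (\<lambda>n. a n *\<^sub>R V n) sums metric_proj (series_cone V) w)"
  (is "_ \<longleftrightarrow> ?rhs")
proof
  assume "w \<in> face_region V S"
  then obtain a where a: "\<forall>n\<in>S. a n > 0"
    "(\<lambda>n. if n \<in> S then a n *\<^sub>R V n else 0) sums metric_proj (series_cone V) w"
    unfolding face_region_def by blast
  let ?b = "\<lambda>n. if n \<in> S then a n else 0"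
  have "(\<lambda>n. ?b n *\<^sub>R V n) = (\<lambda>n. if n \<in> S then a n *\<^sub>R V n else 0)"
    by (auto simp: fun_eq_iff)
  with a show ?rhs
    by (intro exI[of _ ?b]) (auto simp: less_imp_le)
next
  assume ?rhs
  then obtain a where a: "\<forall>n. a n \<ge> 0" "S = {n. a n > 0}"
    "(\<lambda>n. a n *\<^sub>R V n) sums metric_proj (series_cone V) w" by blast
  moreover have "(\<lambda>n. if n \<in> S then a n *\<^sub>R V n else 0) = (\<lambda>n. a n *\<^sub>R V n)"
    using a(1,2) by (force simp: fun_eq_iff less_le)
  ultimately show "w \<in> face_region V S"
    unfolding face_region_def by auto
qed

lemma face_region_residual_orthogonal:
  fixes V :: "nat \<Rightarrow> 'a::{real_inner,complete_space}"
  assumes "closed (series_cone V)" "w1 \<in> face_region V S" "w2 \<in> face_region V S"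
  shows "inner (w1 - metric_proj (series_cone V) w1) (metric_proj (series_cone V) w2) = 0"
proof -
  obtain a where a: "\<forall>n. a n \<ge> 0" "S = {n. a n > 0}"
      "(\<lambda>n. a n *\<^sub>R V n) sums metric_proj (series_cone V) w1"
    using assms(2) unfolding face_region_iff by blast
  obtain b where b: "\<forall>n. b n \<ge> 0" "S = {n. b n > 0}"
      "(\<lambda>n. b n *\<^sub>R V n) sums metric_proj (series_cone V) w2"
    using assms(3) unfolding face_region_iff by blast
  show ?thesis
  proof (rule inner_sums_eq_0[OF b(3)])
    fix k assume "b k \<noteq> 0"
    then have "a k > 0"
      using a(2) b(1,2) by (auto simp: order.strict_iff_order)
    then show "inner (w1 - metric_proj (series_cone V) w1) (V k) = 0"
      by (rule metric_proj_series_cone_residual_orthogonal[OF assms(1) a(1,3)])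
  qed
qed

lemma metric_proj_face_region_add:
  fixes V :: "nat \<Rightarrow> 'a::{real_inner,complete_space}"
  assumes "closed (series_cone V)" "w1 \<in> face_region V S" "w2 \<in> face_region V S"
  shows "metric_proj (series_cone V) (w1 + w2)
    = metric_proj (series_cone V) w1 + metric_proj (series_cone V) w2"
  using assms by (intro metric_proj_convex_cone_add convex_cone_series_cone face_region_residual_orthogonal)

lemma face_region_add:
  fixes V :: "nat \<Rightarrow> 'a::{real_inner,complete_space}"
  assumes "closed (series_cone V)" "w1 \<in> face_region V S" "w2 \<in> face_region V S"
  shows "w1 + w2 \<in> face_region V S"
proof -
  obtain a where a: "\<forall>n. a n \<ge> 0" "S = {n. a n > 0}"
      "(\<lambda>n. a n *\<^sub>R V n) sums metric_proj (series_cone V) w1"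
    using assms(2) unfolding face_region_iff by blast
  obtain b where b: "\<forall>n. b n \<ge> 0" "S = {n. b n > 0}"
      "(\<lambda>n. b n *\<^sub>R V n) sums metric_proj (series_cone V) w2"
    using assms(3) unfolding face_region_iff by blast
  have "(\<lambda>n. (a n + b n) *\<^sub>R V n) sums metric_proj (series_cone V) (w1 + w2)"
    unfolding metric_proj_face_region_add[OF assms] scaleR_add_left by (intro sums_add a(3) b(3))
  moreover have "S = {n. a n + b n > 0}"
    using a(1,2) b(1,2) by (auto simp: add_pos_nonneg)
  ultimately show ?thesis
    unfolding face_region_iff using a(1) b(1) by (intro exI[of _ "\<lambda>n. a n + b n"]) auto
qed

lemma face_region_scaleR:
  fixes V :: "nat \<Rightarrow> 'a::{real_inner,complete_space}"
  assumes "closed (series_cone V)" "w \<in> face_region V S" "l > 0"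
  shows "l *\<^sub>R w \<in> face_region V S"
proof -
  obtain a where a: "\<forall>n. a n \<ge> 0" "S = {n. a n > 0}"
      "(\<lambda>n. a n *\<^sub>R V n) sums metric_proj (series_cone V) w"
    using assms(2) unfolding face_region_iff by blast
  have "(\<lambda>n. (l * a n) *\<^sub>R V n) sums metric_proj (series_cone V) (l *\<^sub>R w)"
    using sums_scaleR_right[OF a(3), of l] assms(3)
    by (simp add: metric_proj_convex_cone_scaleR[OF convex_cone_series_cone assms(1)])
  moreover have "S = {n. l * a n > 0}"
    using a(2) assms(3) by (simp add: zero_less_mult_iff)
  ultimately show ?thesis
    unfolding face_region_iff using a(1) assms(3) by (intro exI[of _ "\<lambda>n. l * a n"]) auto
qed

lemma ex_face_region:
  fixes V :: "nat \<Rightarrow> 'a::{real_inner,complete_space}"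
  assumes "closed (series_cone V)"
  shows "\<exists>S. w \<in> face_region V S"
proof -
  have "metric_proj (series_cone V) w \<in> series_cone V"
    by (rule metric_proj_convex_cone_in[OF convex_cone_series_cone assms])
  then obtain a where "\<forall>n. a n \<ge> 0" "(\<lambda>n. a n *\<^sub>R V n) sums metric_proj (series_cone V) w"
    unfolding series_cone_def by blast
  then have "w \<in> face_region V {n. a n > 0}"
    unfolding face_region_iff by blast
  then show ?thesis ..
qed

lemma face_region_disjoint:
  assumes "no_positive_relations V" "S \<noteq> T"
  shows "face_region V S \<inter> face_region V T = {}"
proof (rule equals0I)
  fix w assume "w \<in> face_region V S \<inter> face_region V T"
  then have w: "w \<in> face_region V S" "w \<in> face_region V T"
    by simp_all
  obtain a where a: "\<forall>n. a n \<ge> 0" "S = {n. a n > 0}"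
      "(\<lambda>n. a n *\<^sub>R V n) sums metric_proj (series_cone V) w"
    using w(1) unfolding face_region_iff by blast
  obtain b where b: "\<forall>n. b n \<ge> 0" "T = {n. b n > 0}"
      "(\<lambda>n. b n *\<^sub>R V n) sums metric_proj (series_cone V) w"
    using w(2) unfolding face_region_iff by blast
  have "\<forall>n. a n = b n"
    using assms(1) a(1,3) b(1,3) unfolding no_positive_relations_def by blast
  with a(2) b(2) \<open>S \<noteq> T\<close> show False
    by auto
qed

lemma convex_cone_face_region:
  fixes V :: "nat \<Rightarrow> 'a::{real_inner,complete_space}"
  assumes "closed (series_cone V)"
  shows "convex_cone ({0} \<union> face_region V S)"
  unfolding convex_cone_iff
proof (intro conjI ballI allI impI)
  fix x y assume "x \<in> {0} \<union> face_region V S" "y \<in> {0} \<union> face_region V S"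
  then show "x + y \<in> {0} \<union> face_region V S"
    using face_region_add[OF assms, of x S y] by auto
next
  fix x and c :: real assume "x \<in> {0} \<union> face_region V S" "c \<ge> 0"
  then show "c *\<^sub>R x \<in> {0} \<union> face_region V S"
    using face_region_scaleR[OF assms, of x S c] by (cases "c = 0") auto
qed simp

theorem corollary1p4:
  fixes V :: "nat \<Rightarrow> 'a::{real_inner, complete_space}"
  assumes "no_positive_relations V"
    and "closed (series_cone V)"
  shows "(\<Union>S. face_region V S) = UNIV
    \<and> (\<forall>S T. S \<noteq> T \<longrightarrow> face_region V S \<inter> face_region V T = {})
    \<and> (\<forall>S. convex_cone ({0} \<union> face_region V S))
    \<and> (\<forall>S l1 l2 w1 w2. l1 > 0 \<longrightarrow> l2 > 0 \<longrightarrow> w1 \<in> face_region V S \<longrightarrow> w2 \<in> face_region V S \<longrightarrow>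
           metric_proj (series_cone V) (l1 *\<^sub>R w1 + l2 *\<^sub>R w2)
             = l1 *\<^sub>R metric_proj (series_cone V) w1 + l2 *\<^sub>R metric_proj (series_cone V) w2)"
proof (intro conjI allI impI)
  note closed = assms(2)
  show "(\<Union>S. face_region V S) = UNIV"
    using ex_face_region[OF closed] by blast
  show "face_region V S \<inter> face_region V T = {}" if "S \<noteq> T" for S T
    using face_region_disjoint[OF assms(1) that] .
  show "convex_cone ({0} \<union> face_region V S)" for S
    using convex_cone_face_region[OF closed] .
  fix S l1 l2 w1 w2
  assume l: "(0::real) < l1" "(0::real) < l2" and w: "w1 \<in> face_region V S" "w2 \<in> face_region V S"
  have "metric_proj (series_cone V) (l1 *\<^sub>R w1 + l2 *\<^sub>R w2)
      = metric_proj (series_cone V) (l1 *\<^sub>R w1) + metric_proj (series_cone V) (l2 *\<^sub>R w2)"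
    using l w by (intro metric_proj_face_region_add[OF closed] face_region_scaleR[OF closed])
  also have "\<dots> = l1 *\<^sub>R metric_proj (series_cone V) w1 + l2 *\<^sub>R metric_proj (series_cone V) w2"
    using l by (simp add: metric_proj_convex_cone_scaleR[OF convex_cone_series_cone closed])
  finally show "metric_proj (series_cone V) (l1 *\<^sub>R w1 + l2 *\<^sub>R w2)
      = l1 *\<^sub>R metric_proj (series_cone V) w1 + l2 *\<^sub>R metric_proj (series_cone V) w2" .
qed

end
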